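(* Let $\alpha>0$ and let $D_\alpha(t)=(1+t^{-\alpha})^{-1}$ for $t>0$, $D_\alpha(0)=0$. A distribution function $F\in\Delta_+$ is in the Boolean max-domain of attraction of $D_\alpha$ if and only if $1-F$ is regularly varying of index $-\alpha$.
   Context: $\Delta_+$ is the set of functions $F:[0,\infty)\to[0,1]$ that are nondecreasing, right continuous and satisfy $\lim_{t\to\infty}F(t)=1$. Define $\sqcap$ on $[0,1]$ by $(x\sqcap y)^{-1}-1=(x^{-1}-1)+(y^{-1}-1)$ (conventions $0^{-1}=+\infty$, $(+\infty)^{-1}=0$), and the Boolean max-convolution of $F,G\in\Delta_+$ by $(F\boxed{\vee}G)(t)=F(t)\sqcap G(t)$; $G^{\boxed{\vee}n}$ denotes the $n$-fold Boolean max-convolution of $G$ with itself. $G\in\Delta_+$ is in the Boolean max-domain of attraction of $H\in\Delta_+$ if there exist $a_n>0$ ($n\in\mathbb{N}$) with $G^{\boxed{\vee}n}(a_nt)\to H(t)$ as $n\to\infty$ for all $t\ge0$. A function $h$ on $[0,\infty)$ is regularly varying of index $-\alpha$ if $\lim_{t\to+\infty}h(tx)/h(t)=x^{-\alpha}$ for all $x>0$. *)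

theory Defs
  imports "HOL-Analysis.Analysis"
begin

text \<open>Distribution functions on [0,\<infinity>): only values at t \<ge> 0 matter.\<close>
definition Delta_plus :: "(real \<Rightarrow> real) set" where
  "Delta_plus = {F. (\<forall>t\<ge>0. 0 \<le> F t \<and> F t \<le> 1)
                  \<and> mono_on {0..} F
                  \<and> (\<forall>t\<ge>0. continuous (at_right t) F)
                  \<and> (F \<longlongrightarrow> 1) at_top}"

text \<open>The operation x \<sqinter> y on [0,1]: (x\<sqinter>y)^{-1} - 1 = (x^{-1}-1) + (y^{-1}-1),
  with 0^{-1} = +\<infinity> and (+\<infinity>)^{-1} = 0.\<close>
definition bool_meet :: "real \<Rightarrow> real \<Rightarrow> real" where
  "bool_meet x y = (if x = 0 \<or> y = 0 then 0 else 1 / (1 / x + 1 / y - 1))"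

definition bool_maxconv :: "(real \<Rightarrow> real) \<Rightarrow> (real \<Rightarrow> real) \<Rightarrow> (real \<Rightarrow> real)" where
  "bool_maxconv F G = (\<lambda>t. bool_meet (F t) (G t))"

text \<open>n-fold Boolean max-convolution; the 0-fold power is the neutral element 1
  (only n \<ge> 1 matter for limits).\<close>
fun bool_maxpow :: "(real \<Rightarrow> real) \<Rightarrow> nat \<Rightarrow> (real \<Rightarrow> real)" where
  "bool_maxpow G 0 = (\<lambda>t. 1)"
| "bool_maxpow G (Suc n) = bool_maxconv G (bool_maxpow G n)"

definition bool_max_domain_of_attraction :: "(real \<Rightarrow> real) \<Rightarrow> (real \<Rightarrow> real) \<Rightarrow> bool" where
  "bool_max_domain_of_attraction G H \<longleftrightarrow>
     (\<exists>a :: nat \<Rightarrow> real. (\<forall>n. a n > 0) \<and>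
        (\<forall>t\<ge>0. (\<lambda>n. bool_maxpow G n (a n * t)) \<longlonglongrightarrow> H t))"

definition regularly_varying :: "real \<Rightarrow> (real \<Rightarrow> real) \<Rightarrow> bool" where
  "regularly_varying \<rho> h \<longleftrightarrow>
     (\<forall>x>0. ((\<lambda>t. h (t * x) / h t) \<longlongrightarrow> x powr \<rho>) at_top)"

definition D_alpha :: "real \<Rightarrow> real \<Rightarrow> real" where
  "D_alpha \<alpha> t = (if t > 0 then 1 / (1 + t powr (- \<alpha>)) else 0)"

end

theory Submission
  imports Defs
begin

text \<open>By induction, the \<open>n\<close>-fold Boolean max-convolution power of \<open>F\<close> at \<open>s\<close> equals
  \<open>F s / (F s + n (1 - F s))\<close>. Hence its convergence at \<open>a\<^sub>n t\<close> to \<open>D\<^sub>\<alpha> t\<close> amounts to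
  \<open>n (1 - F (a\<^sub>n t)) \<rightarrow> t\<^sup>-\<^sup>\<alpha>\<close> for \<open>t > 0\<close>, and to \<open>F 0 < 1\<close> at \<open>t = 0\<close>. Existence of such
  normalizing constants \<open>a\<^sub>n\<close> is the classical sequential characterization of regular variation of
  \<open>g = 1 - F\<close>: given regular variation one takes \<open>a\<^sub>n\<close> to be the generalized inverse of \<open>1 / g\<close> at
  \<open>n\<close>; conversely, with \<open>n \<approx> 1 / g s\<close>, monotonicity of \<open>g\<close> traps \<open>s\<close> between \<open>a\<^sub>n / q\<close> and
  \<open>a\<^sub>n q\<close>, which squeezes \<open>g (s x) / g s\<close> between values close to \<open>(x q)\<^sup>-\<^sup>\<alpha>\<close> and \<open>(x / q)\<^sup>-\<^sup>\<alpha>\<close>.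
  Either side forces \<open>g > 0\<close> on \<open>[0, \<infinity>)\<close>.\<close>

lemma bool_maxpow_eq:
  assumes "n \<ge> 1" "0 \<le> F s" "F s \<le> 1"
  shows "bool_maxpow F n s = F s / (F s + real n * (1 - F s))"
  using assms(1)
proof (induction n rule: dec_induct)
  case base
  then show ?case using assms by (simp add: bool_maxconv_def bool_meet_def)
next
  case (step m)
  have denom: "F s + real m * (1 - F s) \<ge> 1"
    using step.hyps assms by (smt (verit) mult_le_cancel_right1 of_nat_1 of_nat_mono)
  show ?case
  proof (cases "F s = 0")
    case False
    with assms have "F s > 0" by simp
    with step.IH denom have "bool_maxpow F (Suc m) s
        = 1 / (1 / F s + (F s + real m * (1 - F s)) / F s - 1)"
      by (simp add: bool_maxconv_def bool_meet_def)
    with \<open>F s > 0\<close> denom show ?thesis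
      by (simp add: field_simps)
  qed (simp add: bool_maxconv_def bool_meet_def)
qed

lemma tendsto_boolean_ratio_iff:
  fixes f :: "nat \<Rightarrow> real"
  assumes "L > 0" and f01: "\<And>n. 0 \<le> f n \<and> f n \<le> 1"
  shows "(\<lambda>n. f n / (f n + real n * (1 - f n))) \<longlonglongrightarrow> 1 / (1 + L) \<longleftrightarrow>
         (\<lambda>n. real n * (1 - f n)) \<longlonglongrightarrow> L"
    (is "?r \<longlonglongrightarrow> _ \<longleftrightarrow> ?w \<longlonglongrightarrow> _")
proof
  assume w: "?w \<longlonglongrightarrow> L"
  have "(\<lambda>n. ?w n / real n) \<longlonglongrightarrow> 0"
    by (rule tendsto_divide_0[OF w filterlim_at_top_imp_at_infinity[OF filterlim_real_sequentially]])
  moreover have "eventually (\<lambda>n. ?w n / real n = 1 - f n) sequentially"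
    using eventually_gt_at_top[of 0] by eventually_elim simp
  ultimately have "(\<lambda>n. 1 - (1 - f n)) \<longlonglongrightarrow> 1 - 0"
    by (intro tendsto_intros) (rule Lim_transform_eventually)
  then have "f \<longlonglongrightarrow> 1" by simp
  then show "?r \<longlonglongrightarrow> 1 / (1 + L)"
    using \<open>L > 0\<close> by (intro tendsto_intros w) auto
next
  assume r: "?r \<longlonglongrightarrow> 1 / (1 + L)"
  have "eventually (\<lambda>n. ?r n > 0) sequentially"
    using order_tendstoD(1)[OF r] \<open>L > 0\<close> by simp
  then have f_pos: "eventually (\<lambda>n. f n > 0) sequentially"
    by eventually_elim (metis div_0 f01 less_eq_real_def order_less_irrefl)
  \<comment> \<open>\<open>1 / r\<^sub>n - 1 = w\<^sub>n / f\<^sub>n\<close>; the factor \<open>f\<^sub>n\<close> is then removed using \<open>f\<^sub>n \<longrightarrow> 1\<close>,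
    which holds because \<open>w\<^sub>n / f\<^sub>n\<close> is bounded and \<open>f\<^sub>n \<le> 1\<close>.\<close>
  have "(\<lambda>n. 1 / ?r n - 1) \<longlonglongrightarrow> 1 / (1 / (1 + L)) - 1"
    using \<open>L > 0\<close> by (intro tendsto_intros r) auto
  moreover have "eventually (\<lambda>n. 1 / ?r n - 1 = ?w n / f n) sequentially"
    using f_pos by eventually_elim (simp add: field_simps)
  ultimately have wf: "(\<lambda>n. ?w n / f n) \<longlonglongrightarrow> L"
    using \<open>L > 0\<close> by (simp add: Lim_transform_eventually)
  have "eventually (\<lambda>n. 1 - f n \<le> (L + 1) / real n) sequentially"
    using order_tendstoD(2)[OF wf, of "L + 1", simplified] f_pos eventually_gt_at_top[of 0]
  proof eventually_elim
    case (elim n)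
    have "?w n \<le> ?w n / f n"
      using elim f01[of n] by (simp add: le_divide_eq mult_left_le)
    with elim have "real n * (1 - f n) \<le> L + 1" by linarith
    with elim show ?case by (simp add: field_simps)
  qed
  then have "(\<lambda>n. 1 - f n) \<longlonglongrightarrow> 0"
    by (intro tendsto_sandwich[OF _ _ tendsto_const lim_const_over_n]) (use f01 in auto)
  then have "(\<lambda>n. ?w n / f n * (1 - (1 - f n))) \<longlonglongrightarrow> L * (1 - 0)"
    by (intro tendsto_intros wf)
  moreover have "eventually (\<lambda>n. ?w n / f n * (1 - (1 - f n)) = ?w n) sequentially"
    using f_pos by eventually_elim simp
  ultimately show "?w \<longlonglongrightarrow> L"
    by (simp add: Lim_transform_eventually)
qed

lemma tendsto_boolean_ratio_const_zero_iff:
  fixes c :: real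
  assumes "0 \<le> c" "c \<le> 1"
  shows "(\<lambda>n. c / (c + real n * (1 - c))) \<longlonglongrightarrow> 0 \<longleftrightarrow> c < 1"
proof
  assume "c < 1"
  show "(\<lambda>n. c / (c + real n * (1 - c))) \<longlonglongrightarrow> 0"
  proof (rule tendsto_sandwich[OF _ _ tendsto_const lim_const_over_n[of "1 / (1 - c)"]])
    show "eventually (\<lambda>n. 0 \<le> c / (c + real n * (1 - c))) sequentially"
      using assms by simp
    show "eventually (\<lambda>n. c / (c + real n * (1 - c)) \<le> 1 / (1 - c) / real n) sequentially"
      using eventually_gt_at_top[of 0]
    proof eventually_elim
      case (elim n)
      with \<open>c < 1\<close> have "c / (c + real n * (1 - c)) \<le> 1 / (real n * (1 - c))"
        using assms by (intro frac_le) auto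
      then show ?case by (simp add: field_simps)
    qed
  qed
next
  assume "(\<lambda>n. c / (c + real n * (1 - c))) \<longlonglongrightarrow> 0"
  moreover have "c = 1 \<Longrightarrow> (\<lambda>n. c / (c + real n * (1 - c))) \<longlonglongrightarrow> 1"
    by simp
  ultimately show "c < 1"
    using assms LIMSEQ_unique by fastforce
qed

definition normalizing_sequence :: "real \<Rightarrow> (real \<Rightarrow> real) \<Rightarrow> (nat \<Rightarrow> real) \<Rightarrow> bool" where
  "normalizing_sequence \<alpha> g a \<longleftrightarrow>
     (\<forall>n. a n > 0) \<and> (\<forall>t>0. (\<lambda>n. real n * g (a n * t)) \<longlonglongrightarrow> t powr (- \<alpha>))"

lemma bool_max_domain_of_attraction_D_alpha_iff:
  assumes F01: "\<And>t. t \<ge> 0 \<Longrightarrow> 0 \<le> F t \<and> F t \<le> 1"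
  shows "bool_max_domain_of_attraction F (D_alpha \<alpha>) \<longleftrightarrow>
         F 0 < 1 \<and> (\<exists>a. normalizing_sequence \<alpha> (\<lambda>t. 1 - F t) a)"
proof -
  define r where "r a t n = F (a n * t) / (F (a n * t) + real n * (1 - F (a n * t)))"
    for a :: "nat \<Rightarrow> real" and t n
  have maxpow_eq_r: "(\<lambda>n. bool_maxpow F n (a n * t)) \<longlonglongrightarrow> L \<longleftrightarrow> r a t \<longlonglongrightarrow> L"
    if "\<forall>n. a n > 0" "t \<ge> 0" for a t L
  proof (rule tendsto_cong)
    show "eventually (\<lambda>n. bool_maxpow F n (a n * t) = r a t n) sequentially"
      using that F01[of "a _ * t"] unfolding r_def
      by (intro eventually_sequentiallyI[of 1] bool_maxpow_eq) (auto simp: less_imp_le)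
  qed
  have pointwise: "(\<forall>t\<ge>0. (\<lambda>n. bool_maxpow F n (a n * t)) \<longlonglongrightarrow> D_alpha \<alpha> t) \<longleftrightarrow>
      F 0 < 1 \<and> (\<forall>t>0. (\<lambda>n. real n * (1 - F (a n * t))) \<longlonglongrightarrow> t powr (- \<alpha>))"
    if a: "\<forall>n. a n > 0" for a
  proof -
    have at_zero: "r a 0 \<longlonglongrightarrow> 0 \<longleftrightarrow> F 0 < 1"
      using tendsto_boolean_ratio_const_zero_iff[of "F 0"] F01[of 0] by (simp add: r_def[abs_def])
    have at_pos: "r a t \<longlonglongrightarrow> D_alpha \<alpha> t \<longleftrightarrow>
        (\<lambda>n. real n * (1 - F (a n * t))) \<longlonglongrightarrow> t powr (- \<alpha>)" if "t > 0" for t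
      unfolding r_def[abs_def] D_alpha_def using that a F01
      by (simp only: if_True, intro tendsto_boolean_ratio_iff) (auto simp: less_imp_le)
    have "(\<forall>t\<ge>0. P t) \<longleftrightarrow> P 0 \<and> (\<forall>t>0. P t)" for P :: "real \<Rightarrow> bool"
      by (metis less_eq_real_def order_refl)
    then show ?thesis
      using maxpow_eq_r[OF a] at_zero at_pos by (simp add: D_alpha_def less_imp_le)
  qed
  show ?thesis
    unfolding bool_max_domain_of_attraction_def normalizing_sequence_def
    using pointwise by blast
qed

lemma regularly_varying_pos:
  fixes g :: "real \<Rightarrow> real"
  assumes rv: "regularly_varying \<rho> g"
    and anti: "\<And>s t. 0 \<le> s \<Longrightarrow> s \<le> t \<Longrightarrow> g t \<le> g s"
    and nonneg: "\<And>s. s \<ge> 0 \<Longrightarrow> g s \<ge> 0"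
    and "s \<ge> 0"
  shows "g s > 0"
proof -
  have "((\<lambda>t. g (t * 2) / g t) \<longlongrightarrow> 2 powr \<rho>) at_top"
    using rv by (simp add: regularly_varying_def)
  from order_tendstoD(1)[OF this, of 0]
  have "eventually (\<lambda>t. g (t * 2) / g t > 0 \<and> t \<ge> s) at_top"
    by (auto intro: eventually_conj eventually_ge_at_top)
  then obtain t where "g (t * 2) / g t > 0" "t \<ge> s"
    using eventually_happens by force
  then have "g t > 0"
    using nonneg[of t] \<open>s \<ge> 0\<close> by (cases "g t = 0") auto
  with anti[of s t] \<open>s \<ge> 0\<close> \<open>t \<ge> s\<close> show ?thesis by simp
qed

lemma normalizing_sequence_pos:
  fixes g :: "real \<Rightarrow> real"
  assumes norm: "normalizing_sequence \<alpha> g a"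
    and anti: "\<And>s t. 0 \<le> s \<Longrightarrow> s \<le> t \<Longrightarrow> g t \<le> g s"
    and "g 0 > 0" and rc0: "(g \<longlongrightarrow> g 0) (at_right 0)"
    and "s \<ge> 0"
  shows "g s > 0"
proof (rule ccontr)
  assume "\<not> g s > 0"
  then have vanish: "g y \<le> 0" if "y \<ge> s" for y
    using anti[of s y] \<open>s \<ge> 0\<close> that by simp
  with \<open>g 0 > 0\<close> \<open>s \<ge> 0\<close> have "s > 0"
    by (metis less_eq_real_def not_le)
  have apos: "\<And>n. a n > 0"
    and lim: "\<And>t. t > 0 \<Longrightarrow> (\<lambda>n. real n * g (a n * t)) \<longlonglongrightarrow> t powr (- \<alpha>)"
    using norm by (auto simp: normalizing_sequence_def)
  \<comment> \<open>Since \<open>g (a\<^sub>n t) > 0\<close> eventually for every \<open>t > 0\<close>, \<open>a\<^sub>n\<close> eventually lies below \<open>s / t\<close>,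
    so \<open>a\<^sub>n \<rightarrow> 0\<close> and \<open>n g (a\<^sub>n) \<rightarrow> \<infinity>\<close>, contradicting \<open>n g (a\<^sub>n) \<rightarrow> 1\<close>.\<close>
  have "a \<longlonglongrightarrow> 0"
  proof (rule order_tendstoI)
    fix e :: real assume "e > 0"
    have "eventually (\<lambda>n. real n * g (a n * (s / e)) > 0) sequentially"
      using order_tendstoD(1)[OF lim, of "s / e" 0] \<open>s > 0\<close> \<open>e > 0\<close> by simp
    then show "eventually (\<lambda>n. a n < e) sequentially"
    proof eventually_elim
      case (elim n)
      then have "g (a n * (s / e)) > 0"
        by (simp add: zero_less_mult_iff)
      then have "a n * (s / e) < s"
        using vanish[of "a n * (s / e)"] by linarith
      with \<open>s > 0\<close> \<open>e > 0\<close> show ?case by (simp add: field_simps)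
    qed
  qed (use apos in \<open>auto intro: always_eventually less_trans[OF _ apos]\<close>)
  then have "filterlim a (at_right 0) sequentially"
    using apos by (auto intro: tendsto_imp_filterlim_at_right)
  then have "(\<lambda>n. g (a n)) \<longlonglongrightarrow> g 0"
    by (rule filterlim_compose[OF rc0])
  then have "filterlim (\<lambda>n. real n * g (a n)) at_infinity sequentially"
    using \<open>g 0 > 0\<close> by (intro filterlim_at_top_imp_at_infinity
        filterlim_at_top_mult_tendsto_pos filterlim_real_sequentially)
  moreover have "(\<lambda>n. real n * g (a n)) \<longlonglongrightarrow> 1"
    using lim[of 1] by simp
  ultimately show False
    by (intro not_tendsto_and_filterlim_at_infinity[OF sequentially_bot]) auto
qed

lemma ex_gt_one_powr_close:
  fixes L e \<alpha> :: real
  assumes "L > 0" "e > 0"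
  shows "\<exists>q>1. L * q powr \<alpha> < L + e \<and> L * q powr (- \<alpha>) > L - e"
proof -
  have lim: "((\<lambda>q. L * q powr \<beta>) \<longlongrightarrow> L) (at_right 1)" for \<beta> :: real
  proof -
    have "((\<lambda>q. L * q powr \<beta>) \<longlongrightarrow> L * 1 powr \<beta>) (at_right 1)"
      by (intro tendsto_intros) auto
    then show ?thesis by simp
  qed
  have "eventually (\<lambda>q. L * q powr \<alpha> < L + e \<and> L * q powr (- \<alpha>) > L - e \<and> q > 1) (at_right 1)"
    using order_tendstoD(2)[OF lim, of "L + e"] order_tendstoD(1)[OF lim, of "L - e"] \<open>e > 0\<close>
    by (auto intro!: eventually_conj eventually_at_right_less)
  then show ?thesis
    using eventually_happens[of _ "at_right (1::real)"] by auto
qed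

lemma normalizing_sequence_tendsto_zero:
  assumes "normalizing_sequence \<alpha> g a" "t > 0"
  shows "(\<lambda>n. g (a n * t)) \<longlonglongrightarrow> 0"
proof -
  have "(\<lambda>n. real n * g (a n * t) / real n) \<longlonglongrightarrow> 0"
    using assms by (intro tendsto_divide_0[OF _ filterlim_at_top_imp_at_infinity]
        filterlim_real_sequentially) (auto simp: normalizing_sequence_def)
  moreover have "eventually (\<lambda>n. real n * g (a n * t) / real n = g (a n * t)) sequentially"
    using eventually_gt_at_top[of 0] by eventually_elim simp
  ultimately show ?thesis
    by (rule Lim_transform_eventually)
qed

lemma filterlim_at_top_of_scaled_bounded:
  fixes g :: "real \<Rightarrow> real" and a :: "nat \<Rightarrow> real"
  assumes anti: "\<And>s t. 0 \<le> s \<Longrightarrow> s \<le> t \<Longrightarrow> g t \<le> g s"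
    and gpos: "\<And>s. s \<ge> 0 \<Longrightarrow> g s > 0"
    and "\<And>n. a n \<ge> 0"
    and bounded: "eventually (\<lambda>n. real n * g (a n) \<le> C) sequentially"
  shows "filterlim a at_top sequentially"
  unfolding filterlim_at_top
proof
  fix Z :: real
  define M where "M = max Z 0"
  have "filterlim (\<lambda>n. real n * g M) at_top sequentially"
    using gpos[of M] by (intro filterlim_at_top_mult_tendsto_pos[OF tendsto_const]
        filterlim_real_sequentially) (auto simp: M_def)
  then have "eventually (\<lambda>n. real n * g M > C) sequentially"
    by (simp add: filterlim_at_top_dense)
  with bounded show "eventually (\<lambda>n. Z \<le> a n) sequentially"
  proof eventually_elim
    case (elim n)
    have "M \<le> a n"
    proof (rule ccontr)
      assume "\<not> M \<le> a n"
      then have "real n * g M \<le> real n * g (a n)"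
        using anti[of "a n" M] \<open>a n \<ge> 0\<close> by (simp add: mult_left_mono)
      with elim show False by linarith
    qed
    then show ?case by (simp add: M_def)
  qed
qed

lemma ex_generalized_inverse_sequence:
  fixes g :: "real \<Rightarrow> real"
  assumes anti: "\<And>s t. 0 \<le> s \<Longrightarrow> s \<le> t \<Longrightarrow> g t \<le> g s"
    and gpos: "\<And>s. s \<ge> 0 \<Longrightarrow> g s > 0"
    and g0: "(g \<longlongrightarrow> 0) at_top"
    and rc: "\<And>t. t \<ge> 0 \<Longrightarrow> (g \<longlongrightarrow> g t) (at_right t)"
  obtains a where "\<And>n. a n \<ge> 1" "\<And>n. real n * g (a n) \<le> 1"
    "\<And>n s. 1 \<le> s \<Longrightarrow> s < a n \<Longrightarrow> real n * g s > 1"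
proof
  define S where "S n = {s. 1 \<le> s \<and> real n * g s \<le> 1}" for n
  define a where "a n = Inf (S n)" for n
  have ne: "S n \<noteq> {}" for n
  proof -
    have "eventually (\<lambda>s. g s < 1 / (real n + 1) \<and> s \<ge> 1) at_top"
      using order_tendstoD(2)[OF g0, of "1 / (real n + 1)"] by (auto intro: eventually_conj)
    then obtain s where s: "g s < 1 / (real n + 1)" "s \<ge> 1"
      using eventually_happens by force
    then have "real n * g s \<le> 1"
      using gpos[of s] by (simp add: field_simps)
    with s show ?thesis by (auto simp: S_def)
  qed
  have bdd: "bdd_below (S n)" for n
    by (auto simp: S_def bdd_below_def)
  show a_ge: "a n \<ge> 1" for n
    unfolding a_def by (rule cInf_greatest[OF ne]) (auto simp: S_def)
  show "real n * g s > 1" if "1 \<le> s" "s < a n" for n s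
    using that cInf_lower[OF _ bdd, of s n] by (force simp: S_def a_def)
  \<comment> \<open>Right-continuity of \<open>g\<close> carries the bound \<open>n g \<le> 1\<close> from \<open>S n\<close> to its infimum.\<close>
  show "real n * g (a n) \<le> 1" for n
  proof (rule tendsto_upperbound[OF _ _ trivial_limit_at_right_real])
    show "((\<lambda>y. real n * g y) \<longlongrightarrow> real n * g (a n)) (at_right (a n))"
      using rc[of "a n"] a_ge[of n] by (intro tendsto_intros) auto
    show "eventually (\<lambda>y. real n * g y \<le> 1) (at_right (a n))"
      using eventually_at_right_less[of "a n"]
    proof eventually_elim
      case (elim y)
      then obtain s where s: "s \<in> S n" "s < y"
        using cInf_less_iff[OF ne bdd] by (auto simp: a_def)
      then have "g y \<le> g s" using anti[of s y] by (auto simp: S_def)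
      with s show ?case by (auto simp: S_def intro: order_trans[OF mult_left_mono])
    qed
  qed
qed

lemma regularly_varying_imp_normalizing_sequence:
  fixes g :: "real \<Rightarrow> real"
  assumes rv: "regularly_varying (- \<alpha>) g"
    and anti: "\<And>s t. 0 \<le> s \<Longrightarrow> s \<le> t \<Longrightarrow> g t \<le> g s"
    and gpos: "\<And>s. s \<ge> 0 \<Longrightarrow> g s > 0"
    and g0: "(g \<longlongrightarrow> 0) at_top"
    and rc: "\<And>t. t \<ge> 0 \<Longrightarrow> (g \<longlongrightarrow> g t) (at_right t)"
  shows "\<exists>a. normalizing_sequence \<alpha> g a"
proof -
  obtain a where a_ge: "\<And>n. a n \<ge> 1" and upper: "\<And>n. real n * g (a n) \<le> 1"
    and below: "\<And>n s. 1 \<le> s \<Longrightarrow> s < a n \<Longrightarrow> real n * g s > 1"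
    using ex_generalized_inverse_sequence[OF anti gpos g0 rc] by blast
  have a_top: "filterlim a at_top sequentially"
    using a_ge upper by (intro filterlim_at_top_of_scaled_bounded[OF anti gpos, where C = 1])
      (auto intro: order_trans[OF zero_le_one])
  have ratio: "((\<lambda>n. g (a n * t) / g (a n)) \<longlongrightarrow> t powr (- \<alpha>)) sequentially" if "t > 0" for t
    using filterlim_compose[OF rv[unfolded regularly_varying_def, rule_format, OF that] a_top] .
  have at_one: "(\<lambda>n. real n * g (a n)) \<longlonglongrightarrow> 1"
  proof (rule tendstoI)
    fix e :: real assume "e > 0"
    then obtain q where "q > 1" and q: "q powr (- \<alpha>) > 1 - e"
      using ex_gt_one_powr_close[of 1 e \<alpha>] by auto
    have aq_top: "filterlim (\<lambda>n. a n / q) at_top sequentially"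
      using filterlim_at_top_mult_tendsto_pos[OF tendsto_const[of "1 / q"] _ a_top] \<open>q > 1\<close>
      by simp
    \<comment> \<open>\<open>n g (a\<^sub>n) = n g (a\<^sub>n / q) \<cdot> g (a\<^sub>n) / g (a\<^sub>n / q)\<close> with the first factor \<open>> 1\<close>.\<close>
    have "((\<lambda>n. g (a n / q * q) / g (a n / q)) \<longlongrightarrow> q powr (- \<alpha>)) sequentially"
      using filterlim_compose[OF rv[unfolded regularly_varying_def, rule_format, of q]
          aq_top] \<open>q > 1\<close> by simp
    then have "eventually (\<lambda>n. g (a n) / g (a n / q) > 1 - e) sequentially"
      using order_tendstoD(1) q \<open>q > 1\<close> by fastforce
    moreover have "eventually (\<lambda>n. a n / q \<ge> 1) sequentially"
      using aq_top by (simp add: filterlim_at_top)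
    ultimately show "eventually (\<lambda>n. dist (real n * g (a n)) 1 < e) sequentially"
    proof eventually_elim
      case (elim n)
      have "a n / q < a n" using a_ge[of n] \<open>q > 1\<close> by (simp add: field_simps)
      then have "real n * g (a n / q) > 1" using below elim(2) by blast
      moreover have "g (a n / q) > 0" "g (a n) > 0"
        using gpos elim(2) a_ge[of n] by (auto intro: order_trans[OF zero_le_one])
      ultimately have "g (a n) / g (a n / q) \<le> real n * g (a n)"
        by (simp add: field_simps)
      with elim(1) upper[of n] \<open>e > 0\<close> show ?case by (simp add: dist_real_def abs_if)
    qed
  qed
  have "(\<lambda>n. real n * g (a n * t)) \<longlonglongrightarrow> t powr (- \<alpha>)" if "t > 0" for t
  proof -
    have "(\<lambda>n. real n * g (a n) * (g (a n * t) / g (a n))) \<longlonglongrightarrow> 1 * t powr (- \<alpha>)"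
      by (intro tendsto_intros at_one ratio that)
    moreover have "real n * g (a n) * (g (a n * t) / g (a n)) = real n * g (a n * t)" for n
      using gpos[of "a n"] a_ge[of n] by simp
    ultimately show ?thesis by simp
  qed
  with a_ge show ?thesis
    by (auto simp: normalizing_sequence_def intro: less_le_trans[OF zero_less_one])
qed

lemma ratio_bracketed_by_normalizing_sequence:
  fixes g :: "real \<Rightarrow> real" and N :: "real \<Rightarrow> nat"
  assumes norm: "normalizing_sequence \<alpha> g a" and "\<alpha> > 0"
    and anti: "\<And>s t. 0 \<le> s \<Longrightarrow> s \<le> t \<Longrightarrow> g t \<le> g s"
    and gpos: "\<And>s. s \<ge> 0 \<Longrightarrow> g s > 0"
    and N_gt: "\<And>s. s \<ge> 0 \<Longrightarrow> real (N s) * g s > 1"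
    and N_le: "\<And>s. s \<ge> 0 \<Longrightarrow> (real (N s) - 1) * g s \<le> 1"
    and N_top: "filterlim N at_top at_top"
    and "x > 0" "q > 1"
  shows "eventually (\<lambda>s. (real (N s) - 1) * g (a (N s) * (x * q)) \<le> g (s * x) / g s \<and>
                         g (s * x) / g s \<le> real (N s) * g (a (N s) * (x / q))) at_top"
proof -
  have apos: "\<And>n. a n > 0"
    and lim: "\<And>t. t > 0 \<Longrightarrow> (\<lambda>n. real n * g (a n * t)) \<longlonglongrightarrow> t powr (- \<alpha>)"
    using norm by (auto simp: normalizing_sequence_def)
  have "q powr (- \<alpha>) < 1"
    using \<open>q > 1\<close> \<open>\<alpha> > 0\<close> by (simp add: powr_less_one)
  then have "eventually (\<lambda>n. real n * g (a n * q) < 1) sequentially"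
    using order_tendstoD(2)[OF lim] \<open>q > 1\<close> by simp
  moreover have "eventually (\<lambda>n. (real n - 1) * g (a n * (1 / q)) > 1) sequentially"
  proof -
    have "(\<lambda>n. real n * g (a n * (1 / q)) - g (a n * (1 / q))) \<longlonglongrightarrow> (1 / q) powr (- \<alpha>) - 0"
      using \<open>q > 1\<close> by (intro tendsto_intros lim normalizing_sequence_tendsto_zero[OF norm]) auto
    moreover have "(1 / q) powr (- \<alpha>) > 1"
      using \<open>q > 1\<close> \<open>\<alpha> > 0\<close> by (simp add: powr_divide powr_minus_divide)
    ultimately show ?thesis
      using order_tendstoD(1) by (fastforce simp: algebra_simps)
  qed
  ultimately have "eventually (\<lambda>n. real n * g (a n * q) < 1 \<and> (real n - 1) * g (a n * (1 / q)) > 1)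
      sequentially"
    by (rule eventually_conj)
  from filterlim_iff[THEN iffD1, OF N_top, rule_format, OF this]
  show ?thesis
    using eventually_ge_at_top[of 0]
  proof eventually_elim
    case (elim s)
    define n where "n = N s"
    have gs: "g s > 0" "real n * g s > 1" "(real n - 1) * g s \<le> 1"
      using gpos N_gt N_le elim by (auto simp: n_def)
    then have "real n \<ge> 1"
      by (cases n) auto
    \<comment> \<open>\<open>N\<close> inverts \<open>1 / g\<close>, and \<open>a\<^sub>n\<close> inverts \<open>n g\<close>; together they force \<open>a\<^sub>n / q < s < a\<^sub>n q\<close>.\<close>
    have "s < a n * q"
    proof (rule ccontr)
      assume "\<not> s < a n * q"
      then have "real n * g s \<le> real n * g (a n * q)"
        using anti[of "a n * q" s] apos[of n] \<open>q > 1\<close> by (simp add: mult_left_mono)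
      with elim gs show False by (simp add: n_def)
    qed
    have "a n * (1 / q) < s"
    proof (rule ccontr)
      assume "\<not> a n * (1 / q) < s"
      then have "(real n - 1) * g (a n * (1 / q)) \<le> (real n - 1) * g s"
        using anti[of s "a n * (1 / q)"] elim \<open>real n \<ge> 1\<close> by (simp add: mult_left_mono)
      with elim gs show False by (simp add: n_def)
    qed
    have upper: "g (s * x) \<le> g (a n * (x / q))" and lower: "g (a n * (x * q)) \<le> g (s * x)"
      using anti[of "a n * (x / q)" "s * x"] anti[of "s * x" "a n * (x * q)"]
        \<open>s < a n * q\<close> \<open>a n * (1 / q) < s\<close> apos[of n] \<open>x > 0\<close> \<open>q > 1\<close> elim
      by (auto simp: field_simps)
    have "0 \<le> g (s * x)" "0 \<le> g (a n * (x * q))"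
      using gpos \<open>x > 0\<close> \<open>q > 1\<close> apos[of n] elim by (auto intro: less_imp_le)
    have "g (s * x) / g s \<le> real n * g (s * x)"
      using gs \<open>0 \<le> g (s * x)\<close> mult_right_mono[of 1 "real n * g s" "g (s * x)"]
      by (simp add: divide_le_eq mult_ac)
    also have "\<dots> \<le> real n * g (a n * (x / q))"
      using upper by (simp add: mult_left_mono)
    finally have "g (s * x) / g s \<le> real n * g (a n * (x / q))" .
    moreover have "(real n - 1) * g (a n * (x * q)) \<le> (real n - 1) * g (s * x)"
      using lower \<open>real n \<ge> 1\<close> by (simp add: mult_left_mono)
    moreover have "(real n - 1) * g (s * x) \<le> g (s * x) / g s"
      using gs \<open>0 \<le> g (s * x)\<close> mult_right_mono[of "(real n - 1) * g s" 1 "g (s * x)"]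
      by (simp add: le_divide_eq mult_ac)
    ultimately show ?case
      unfolding n_def[symmetric] by linarith
  qed
qed

lemma normalizing_sequence_imp_regularly_varying:
  fixes g :: "real \<Rightarrow> real"
  assumes norm: "normalizing_sequence \<alpha> g a" and "\<alpha> > 0"
    and anti: "\<And>s t. 0 \<le> s \<Longrightarrow> s \<le> t \<Longrightarrow> g t \<le> g s"
    and gpos: "\<And>s. s \<ge> 0 \<Longrightarrow> g s > 0"
    and g0: "(g \<longlongrightarrow> 0) at_top"
  shows "regularly_varying (- \<alpha>) g"
  unfolding regularly_varying_def
proof (intro allI impI tendstoI)
  fix x e :: real assume "x > 0" "e > 0"
  define N where "N s = nat \<lfloor>1 / g s\<rfloor> + 1" for s
  have N_gt: "real (N s) * g s > 1" and N_le: "(real (N s) - 1) * g s \<le> 1" if "s \<ge> 0" for s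
  proof -
    have "1 / g s < real (N s)" "real (N s) - 1 \<le> 1 / g s"
      using gpos[OF that] by (auto simp: N_def) linarith+
    with gpos[OF that] show "real (N s) * g s > 1" "(real (N s) - 1) * g s \<le> 1"
      by (simp_all add: field_simps)
  qed
  have "filterlim (\<lambda>s. inverse (g s)) at_top at_top"
    using gpos by (intro filterlim_inverse_at_top[OF g0] eventually_at_top_linorderI) auto
  then have N_top: "filterlim N at_top at_top"
    unfolding filterlim_at_top
  proof (intro allI)
    fix Z :: nat
    assume "\<forall>Z. eventually (\<lambda>s. Z \<le> inverse (g s)) at_top"
    then have "eventually (\<lambda>s. real Z \<le> 1 / g s) at_top"
      by (simp add: inverse_eq_divide)
    then show "eventually (\<lambda>s. Z \<le> N s) at_top"
      by eventually_elim (simp add: N_def le_SucI le_nat_floor)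
  qed
  define L where "L = x powr (- \<alpha>)"
  have "L > 0" using \<open>x > 0\<close> by (simp add: L_def)
  then obtain q where "q > 1" and q: "L * q powr \<alpha> < L + e" "L * q powr (- \<alpha>) > L - e"
    using ex_gt_one_powr_close \<open>e > 0\<close> by blast
  have "(\<lambda>n. real n * g (a n * (x * q)) - g (a n * (x * q))) \<longlonglongrightarrow> (x * q) powr (- \<alpha>) - 0"
    using norm \<open>x > 0\<close> \<open>q > 1\<close>
    by (intro tendsto_intros normalizing_sequence_tendsto_zero) (auto simp: normalizing_sequence_def)
  moreover have "(x * q) powr (- \<alpha>) = L * q powr (- \<alpha>)"
    using \<open>x > 0\<close> \<open>q > 1\<close> by (simp add: L_def powr_mult)
  ultimately have "eventually (\<lambda>n. (real n - 1) * g (a n * (x * q)) > L - e) sequentially"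
    using order_tendstoD(1) q(2) by (fastforce simp: algebra_simps)
  moreover have "eventually (\<lambda>n. real n * g (a n * (x / q)) < L + e) sequentially"
  proof -
    have "(x / q) powr (- \<alpha>) = L * q powr \<alpha>"
      using \<open>x > 0\<close> \<open>q > 1\<close> by (simp add: L_def powr_divide powr_minus field_simps)
    moreover have "(\<lambda>n. real n * g (a n * (x / q))) \<longlonglongrightarrow> (x / q) powr (- \<alpha>)"
      using norm \<open>x > 0\<close> \<open>q > 1\<close> by (simp add: normalizing_sequence_def del: times_divide_eq_right)
    ultimately show ?thesis
      using order_tendstoD(2) q(1) by metis
  qed
  ultimately have "eventually (\<lambda>s. (real (N s) - 1) * g (a (N s) * (x * q)) > L - e \<and>
      real (N s) * g (a (N s) * (x / q)) < L + e) at_top"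
    using filterlim_iff[THEN iffD1, OF N_top, rule_format] eventually_conj by blast
  moreover have "eventually (\<lambda>s. (real (N s) - 1) * g (a (N s) * (x * q)) \<le> g (s * x) / g s \<and>
      g (s * x) / g s \<le> real (N s) * g (a (N s) * (x / q))) at_top"
    by (rule ratio_bracketed_by_normalizing_sequence[OF norm \<open>\<alpha> > 0\<close> anti gpos N_gt N_le N_top
      \<open>x > 0\<close> \<open>q > 1\<close>])
  ultimately show "eventually (\<lambda>s. dist (g (s * x) / g s) (x powr (- \<alpha>)) < e) at_top"
    by eventually_elim (auto simp: dist_real_def L_def abs_less_iff)
qed

theorem corollary4p3:
  fixes \<alpha> :: real and F :: "real \<Rightarrow> real"
  assumes "\<alpha> > 0" and "F \<in> Delta_plus"
  shows "bool_max_domain_of_attraction F (D_alpha \<alpha>) \<longleftrightarrow>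
         regularly_varying (- \<alpha>) (\<lambda>t. 1 - F t)"
proof -
  define g where "g t = 1 - F t" for t
  have F01: "\<And>t. t \<ge> 0 \<Longrightarrow> 0 \<le> F t \<and> F t \<le> 1" and mono: "mono_on {0..} F"
    and rc: "\<And>t. t \<ge> 0 \<Longrightarrow> (g \<longlongrightarrow> g t) (at_right t)" and g0: "(g \<longlongrightarrow> 0) at_top"
    using assms(2) tendsto_diff[OF tendsto_const[of 1], of F 1]
    by (auto simp: Delta_plus_def g_def[abs_def] continuous_within intro!: tendsto_intros)
  have anti: "\<And>s t. 0 \<le> s \<Longrightarrow> s \<le> t \<Longrightarrow> g t \<le> g s"
    using mono by (simp add: g_def mono_on_def)
  have doa: "bool_max_domain_of_attraction F (D_alpha \<alpha>) \<longleftrightarrow>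
      g 0 > 0 \<and> (\<exists>a. normalizing_sequence \<alpha> g a)"
    using bool_max_domain_of_attraction_D_alpha_iff[OF F01] by (simp add: g_def[abs_def])
  have "bool_max_domain_of_attraction F (D_alpha \<alpha>) \<longleftrightarrow> regularly_varying (- \<alpha>) g"
  proof
    assume "bool_max_domain_of_attraction F (D_alpha \<alpha>)"
    with doa obtain a where "g 0 > 0" and norm: "normalizing_sequence \<alpha> g a" by blast
    then have "\<And>s. s \<ge> 0 \<Longrightarrow> g s > 0"
      using normalizing_sequence_pos[OF norm anti] rc[of 0] by blast
    then show "regularly_varying (- \<alpha>) g"
      using normalizing_sequence_imp_regularly_varying[OF norm \<open>\<alpha> > 0\<close> anti _ g0] by blast
  next
    assume rv: "regularly_varying (- \<alpha>) g"
    then have gpos: "\<And>s. s \<ge> 0 \<Longrightarrow> g s > 0"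
      using regularly_varying_pos[OF rv anti] F01 by (simp add: g_def)
    then show "bool_max_domain_of_attraction F (D_alpha \<alpha>)"
      using doa regularly_varying_imp_normalizing_sequence[OF rv anti gpos g0 rc] by simp
  qed
  then show ?thesis by (simp add: g_def[abs_def])
qed

end
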